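(* Consider $2$ agents with additive, identical, normalized valuation $v$, and no predictions. Consider the online algorithm that allocates each arriving good $g_t$ to agent 1 if $v(A_1)+v(g_t)\le \varphi-1$, where $A_1$ is agent 1's current bundle and $\varphi=\frac{1+\sqrt5}{2}$, and otherwise allocates $g_t$ to agent 2. This algorithm guarantees that the final allocation is $(\varphi-1)$-EFX.
   Context: Online fair division model: goods $g_1,\dots,g_T$ arrive one per time step; the agents have an identical additive normalized valuation $v$ ($v(g_t)\ge0$, $\sum_{t=1}^T v(g_t)=1$, $v(S)=\sum_{g\in S}v(g)$). When $g_t$ arrives, $v(g_t)$ is revealed and $g_t$ must be irrevocably allocated to one agent. For a bundle $S\ne\emptyset$, let $\bar S=S\setminus\{g\}$ with $g\in\arg\max_{g'\in S}v(S\setminus\{g'\})$, and $\bar\emptyset=\emptyset$. For $a\in[0,1]$, an allocation $(A_1,A_2)$ is $a$-EFX if $v(A_i)\ge a\cdot v(\bar A_j)$ for all $i,j$. *)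

theory Defs
  imports Complex_Main
begin

(* Goods are indexed 0, ..., T-1 in arrival order; v t is the value of good t.
   A bundle is a set of good indices; its value is the additive sum. *)

definition bval :: "(nat \<Rightarrow> real) \<Rightarrow> nat set \<Rightarrow> real" where
  "bval v S = (\<Sum>g\<in>S. v g)"

definition bar_val :: "(nat \<Rightarrow> real) \<Rightarrow> nat set \<Rightarrow> real" where
  "bar_val v S = (if S = {} then 0 else Max ((\<lambda>g. bval v (S - {g})) ` S))"

definition is_EFX2 :: "real \<Rightarrow> (nat \<Rightarrow> real) \<Rightarrow> nat set \<Rightarrow> nat set \<Rightarrow> bool" where
  "is_EFX2 a v A1 A2 \<longleftrightarrow>
     (\<forall>Ai\<in>{A1, A2}. \<forall>Aj\<in>{A1, A2}. bval v Ai \<ge> a * bar_val v Aj)"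

definition phi :: real where
  "phi = (1 + sqrt 5) / 2"

(* State of the online algorithm after the first t goods (goods 0..t-1) have arrived:
   good t goes to agent 1 iff v(A_1) + v(g_t) \<le> phi - 1, else to agent 2. *)
fun alloc :: "(nat \<Rightarrow> real) \<Rightarrow> nat \<Rightarrow> nat set \<times> nat set" where
  "alloc v 0 = ({}, {})"
| "alloc v (Suc t) =
     (let (A1, A2) = alloc v t in
      if bval v A1 + v t \<le> phi - 1 then (insert t A1, A2) else (A1, insert t A2))"

end

theory Submission
  imports Defs
begin

text \<open>Write \<open>p = \<phi> - 1\<close>, so that \<open>p\<^sup>2 = 1 - p\<close>. The algorithm keeps \<open>v(A\<^sub>1) \<le> p\<close>, and
  every good of \<open>A\<^sub>2\<close> was rejected by agent 1, so it would have pushed \<open>v(A\<^sub>1)\<close> above \<open>p\<close>.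
  Agent 2 then holds at least \<open>1 - p = p\<^sup>2 \<ge> p v(A\<^sub>1)\<close>. For agent 1, let \<open>g\<close> be the good
  removed in \<open>\<bar>A\<^sub>2\<close> and \<open>h \<noteq> g\<close> another good of \<open>A\<^sub>2\<close>: then \<open>v(A\<^sub>1) > p - v(h) \<ge> p - v(\<bar>A\<^sub>2)\<close>,
  while \<open>v(\<bar>A\<^sub>2) = 1 - v(A\<^sub>1) - v(g) < 1 - p\<close>; and \<open>p - x \<ge> p x\<close> exactly when
  \<open>x \<le> p / (1 + p) = 1 - p\<close>.\<close>

lemma phi_minus_one_pos: "0 < phi - 1"
proof -
  have "1 < sqrt (5::real)" by (simp add: real_less_rsqrt)
  then show ?thesis by (simp add: phi_def)
qed

lemma phi_minus_one_square: "(phi - 1)\<^sup>2 = 1 - (phi - 1)"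
proof -
  have "sqrt 5 * sqrt 5 = (5::real)" by simp
  then show ?thesis by (simp add: phi_def power2_eq_square field_simps)
qed

lemma bval_empty [simp]: "bval v {} = 0"
  by (simp add: bval_def)

lemma bval_nonneg: "(\<And>g. g \<in> S \<Longrightarrow> 0 \<le> v g) \<Longrightarrow> 0 \<le> bval v S"
  unfolding bval_def by (simp add: sum_nonneg)

lemma bval_insert: "finite S \<Longrightarrow> t \<notin> S \<Longrightarrow> bval v (insert t S) = bval v S + v t"
  by (simp add: bval_def)

lemma bval_remove: "finite S \<Longrightarrow> g \<in> S \<Longrightarrow> bval v S = bval v (S - {g}) + v g"
  by (simp add: bval_def sum.remove)

lemma bval_union_disjoint:
  "finite A \<Longrightarrow> finite B \<Longrightarrow> A \<inter> B = {} \<Longrightarrow> bval v (A \<union> B) = bval v A + bval v B"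
  by (simp add: bval_def sum.union_disjoint)

lemma bar_val_attained:
  assumes "finite S" "S \<noteq> {}"
  obtains g where "g \<in> S" "bar_val v S = bval v (S - {g})"
proof -
  have "Max ((\<lambda>g. bval v (S - {g})) ` S) \<in> (\<lambda>g. bval v (S - {g})) ` S"
    using assms by (intro Max_in) auto
  then obtain g where "g \<in> S" "Max ((\<lambda>g. bval v (S - {g})) ` S) = bval v (S - {g})"
    by blast
  with assms show ?thesis by (intro that) (auto simp: bar_val_def)
qed

lemma bar_val_le_bval:
  assumes "finite S" "\<And>g. g \<in> S \<Longrightarrow> 0 \<le> v g"
  shows "bar_val v S \<le> bval v S"
proof (cases "S = {}")
  case True
  then show ?thesis by (simp add: bar_val_def)
next
  case False
  obtain g where "g \<in> S" "bar_val v S = bval v (S - {g})"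
    using assms(1) False by (rule bar_val_attained)
  then show ?thesis using assms bval_remove[of S g v] by simp
qed

lemma bar_val_nonneg:
  assumes "finite S" "\<And>g. g \<in> S \<Longrightarrow> 0 \<le> v g"
  shows "0 \<le> bar_val v S"
proof (cases "S = {}")
  case True
  then show ?thesis by (simp add: bar_val_def)
next
  case False
  obtain g where "bar_val v S = bval v (S - {g})"
    using assms(1) False by (rule bar_val_attained)
  then show ?thesis using assms(2) bval_nonneg[of "S - {g}" v] by simp
qed

lemma scaled_bar_val_le_bval:
  assumes "finite S" "\<And>g. g \<in> S \<Longrightarrow> 0 \<le> v g" "0 \<le> a" "a \<le> 1"
  shows "a * bar_val v S \<le> bval v S"
proof -
  have "a * bar_val v S \<le> bar_val v S"
    using assms bar_val_nonneg[OF assms(1,2)] by (simp add: mult_left_le_one_le)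
  moreover have "bar_val v S \<le> bval v S"
    using assms(1,2) by (rule bar_val_le_bval)
  ultimately show ?thesis by linarith
qed

lemma is_EFX2_of_threshold_split:
  assumes fin: "finite A\<^sub>1" "finite A\<^sub>2"
    and nonneg: "\<And>g. g \<in> A\<^sub>1 \<union> A\<^sub>2 \<Longrightarrow> 0 \<le> v g"
    and total: "bval v A\<^sub>1 + bval v A\<^sub>2 = 1"
    and a_nonneg: "0 \<le> a" and a_square: "a\<^sup>2 = 1 - a"
    and A\<^sub>1_le: "bval v A\<^sub>1 \<le> a"
    and A\<^sub>2_rejected: "\<And>g. g \<in> A\<^sub>2 \<Longrightarrow> a < bval v A\<^sub>1 + v g"
  shows "is_EFX2 a v A\<^sub>1 A\<^sub>2"
proof -
  have nonneg\<^sub>1: "\<And>g. g \<in> A\<^sub>1 \<Longrightarrow> 0 \<le> v g" and nonneg\<^sub>2: "\<And>g. g \<in> A\<^sub>2 \<Longrightarrow> 0 \<le> v g"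
    using nonneg by auto
  have a_le_one: "a \<le> 1"
    using a_nonneg a_square by (metis diff_ge_0_iff_ge zero_le_power2)
  have own\<^sub>1: "a * bar_val v A\<^sub>1 \<le> bval v A\<^sub>1" and own\<^sub>2: "a * bar_val v A\<^sub>2 \<le> bval v A\<^sub>2"
    using scaled_bar_val_le_bval fin nonneg\<^sub>1 nonneg\<^sub>2 a_nonneg a_le_one by blast+
  have envy\<^sub>2: "a * bar_val v A\<^sub>1 \<le> bval v A\<^sub>2"
  proof -
    have "a * bar_val v A\<^sub>1 \<le> a * a"
      using bar_val_le_bval[of A\<^sub>1 v] fin(1) nonneg\<^sub>1 A\<^sub>1_le a_nonneg by (intro mult_left_mono) auto
    then show ?thesis using a_square total A\<^sub>1_le by (simp add: power2_eq_square)
  qed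
  have envy\<^sub>1: "a * bar_val v A\<^sub>2 \<le> bval v A\<^sub>1"
  proof (cases "A\<^sub>2 = {}")
    case True
    then show ?thesis using bval_nonneg[of A\<^sub>1 v] nonneg\<^sub>1 by (simp add: bar_val_def)
  next
    case False
    obtain g where g: "g \<in> A\<^sub>2" "bar_val v A\<^sub>2 = bval v (A\<^sub>2 - {g})"
      using fin(2) False by (rule bar_val_attained)
    show ?thesis
    proof (cases "A\<^sub>2 - {g} = {}")
      case True
      then have "bar_val v A\<^sub>2 = 0" by (simp only: g(2) bval_empty)
      then show ?thesis using bval_nonneg[of A\<^sub>1 v] nonneg\<^sub>1 by simp
    next
      case False
      then obtain h where h: "h \<in> A\<^sub>2 - {g}" by blast
      have "v h \<le> bar_val v A\<^sub>2"
        unfolding g(2) bval_def using h fin(2) nonneg\<^sub>2 by (intro member_le_sum) auto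
      then have above: "a - bar_val v A\<^sub>2 < bval v A\<^sub>1"
        using A\<^sub>2_rejected[of h] h by simp
      have "bar_val v A\<^sub>2 < 1 - a"
        using g A\<^sub>2_rejected[of g] bval_remove[OF fin(2) g(1)] total by simp
      then have "(1 + a) * bar_val v A\<^sub>2 \<le> (1 + a) * (1 - a)"
        using a_nonneg by (intro mult_left_mono) auto
      also have "(1 + a) * (1 - a) = a"
        using a_square by (simp add: algebra_simps power2_eq_square)
      finally show ?thesis using above by (simp add: algebra_simps)
    qed
  qed
  show ?thesis
    unfolding is_EFX2_def using own\<^sub>1 own\<^sub>2 envy\<^sub>1 envy\<^sub>2 by auto
qed

lemma alloc_Un: "fst (alloc v t) \<union> snd (alloc v t) = {..<t}"
proof (induction t)
  case (Suc t)
  obtain A\<^sub>1 A\<^sub>2 where alloc: "alloc v t = (A\<^sub>1, A\<^sub>2)" by fastforce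
  show ?case using Suc.IH alloc by (auto simp: lessThan_Suc)
qed simp

lemma finite_alloc: "finite (fst (alloc v t))" "finite (snd (alloc v t))"
  using finite_lessThan[of t] unfolding alloc_Un[of v t, symmetric] by simp_all

lemma alloc_disjoint: "fst (alloc v t) \<inter> snd (alloc v t) = {}"
proof (induction t)
  case (Suc t)
  obtain A\<^sub>1 A\<^sub>2 where alloc: "alloc v t = (A\<^sub>1, A\<^sub>2)" by fastforce
  have "t \<notin> A\<^sub>1 \<union> A\<^sub>2" using alloc_Un[of v t] alloc by simp
  then show ?case using Suc.IH alloc by auto
qed simp

lemma alloc_fst_le: "bval v (fst (alloc v t)) \<le> phi - 1"
proof (induction t)
  case 0
  then show ?case using phi_minus_one_pos by simp
next
  case (Suc t)
  obtain A\<^sub>1 A\<^sub>2 where alloc: "alloc v t = (A\<^sub>1, A\<^sub>2)" by fastforce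
  have "finite A\<^sub>1" "t \<notin> A\<^sub>1"
    using finite_alloc(1)[of v t] alloc_Un[of v t] alloc by auto
  then show ?case using Suc.IH alloc by (simp add: bval_insert)
qed

lemma alloc_snd_rejected:
  assumes "\<And>s. s < t \<Longrightarrow> 0 \<le> v s" "g \<in> snd (alloc v t)"
  shows "phi - 1 < bval v (fst (alloc v t)) + v g"
  using assms
proof (induction t)
  case (Suc t)
  obtain A\<^sub>1 A\<^sub>2 where alloc: "alloc v t = (A\<^sub>1, A\<^sub>2)" by fastforce
  have IH: "g \<in> A\<^sub>2 \<Longrightarrow> phi - 1 < bval v A\<^sub>1 + v g"
    using Suc alloc by simp
  show ?case
  proof (cases "bval v A\<^sub>1 + v t \<le> phi - 1")
    case True
    have "finite A\<^sub>1" "t \<notin> A\<^sub>1"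
      using finite_alloc(1)[of v t] alloc_Un[of v t] alloc by auto
    moreover have "0 \<le> v t" using Suc.prems(1) by simp
    moreover have "g \<in> A\<^sub>2" using Suc.prems(2) True alloc by simp
    ultimately show ?thesis using IH True alloc by (simp add: bval_insert)
  next
    case False
    then have "g = t \<or> g \<in> A\<^sub>2" using Suc.prems(2) alloc by simp
    then show ?thesis using IH False alloc by auto
  qed
qed simp

theorem theorem3p2:
  fixes v :: "nat \<Rightarrow> real" and T :: nat
  assumes nonneg: "\<And>t. t < T \<Longrightarrow> v t \<ge> 0"
    and normalized: "(\<Sum>t<T. v t) = 1"
  shows "is_EFX2 (phi - 1) v (fst (alloc v T)) (snd (alloc v T))"
proof -
  have "bval v (fst (alloc v T)) + bval v (snd (alloc v T))
      = bval v (fst (alloc v T) \<union> snd (alloc v T))"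
    by (simp add: bval_union_disjoint finite_alloc alloc_disjoint)
  also have "\<dots> = 1"
    using normalized by (simp add: alloc_Un bval_def)
  finally have total: "bval v (fst (alloc v T)) + bval v (snd (alloc v T)) = 1" .
  show ?thesis
  proof (rule is_EFX2_of_threshold_split[OF finite_alloc _ total
        less_imp_le[OF phi_minus_one_pos] phi_minus_one_square alloc_fst_le])
    show "\<And>g. g \<in> fst (alloc v T) \<union> snd (alloc v T) \<Longrightarrow> 0 \<le> v g"
      using nonneg by (simp add: alloc_Un)
    show "\<And>g. g \<in> snd (alloc v T) \<Longrightarrow> phi - 1 < bval v (fst (alloc v T)) + v g"
      using nonneg by (rule alloc_snd_rejected)
  qed
qed

end
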